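(* Let $X$ be a uniformly convex and uniformly smooth Banach space, $D_0$ a dislocation group on $X$ and $D\subset D_0$. Let $(u_k)\subset X$ be bounded, $M\in\mathbb N$, and let $(g_k^{(n)})_k\subset D$, $w^{(n)}\in X$, $n=1,\dots,M$, satisfy $g^{(1)}_k=I$, $(g^{(n)}_k)^{-1}u_k\rightharpoondown w^{(n)}$ for $n=1,\dots,M$, and $(g_k^{(n)})^{-1}g_k^{(m)}\rightharpoonup0$ whenever $n<m\le M$. Suppose there is a sequence $(g_k^{(M+1)})\subset D$ such that, along a subsequence, $(g_k^{(M+1)})^{-1}\big(u_k-w^{(1)}-g_k^{(2)}w^{(2)}-\dots-g_k^{(M)}w^{(M)}\big)\rightharpoondown w^{(M+1)}\ne0$. Then (along that subsequence) $(g_k^{(n)})^{-1}g_k^{(M+1)}\rightharpoonup0$ for $n=1,\dots,M$.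
   Context: Δ-convergence: $x_k\rightharpoondown x$ if for every $y\in X$, $\limsup_k(\|x_k-x\|-\|x_k-y\|)\le0$. Operator convergence $g_k\rightharpoonup g$: $g_kx\rightharpoonup gx$ weakly for all $x$; strong convergence: $g_kx\to gx$ in norm for all $x$. A group $D_0$ of bijective linear isometries of $X$ is a dislocation group if: $(\ast)$ whenever $(g_k)\subset D_0$ and $g_k\not\rightharpoonup0$, some subsequence has both $(g_{k_j})$ and $(g_{k_j}^{-1})$ strongly convergent; and $(\ast\ast)$ whenever $u_k\rightharpoondown0$, $w\in X$, $(g_k)\subset D_0$, $g_k\rightharpoonup0$, then $u_k+g_kw\rightharpoondown0$. *)

theory Defs
  imports "HOL-Analysis.Analysis"
begin

definition uniformly_convex :: "'a::real_normed_vector itself \<Rightarrow> bool" where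
  "uniformly_convex _ \<longleftrightarrow>
     (\<forall>e>0. \<exists>d>0. \<forall>x y::'a. norm x \<le> 1 \<and> norm y \<le> 1 \<and> norm (x - y) \<ge> e
        \<longrightarrow> norm ((1/2) *\<^sub>R (x + y)) \<le> 1 - d)"

text \<open>Uniform smoothness: modulus of smoothness rho(t)/t tends to 0 as t tends to 0+,
  where rho(t) = sup over unit x, y of (norm(x+ty)+norm(x-ty))/2 - 1.\<close>
definition uniformly_smooth :: "'a::real_normed_vector itself \<Rightarrow> bool" where
  "uniformly_smooth _ \<longleftrightarrow>
     (\<forall>e>0. \<exists>d>0. \<forall>t. 0 < t \<and> t < d \<longrightarrow>
        (\<forall>x y::'a. norm x = 1 \<and> norm y = 1 \<longrightarrow>
           (norm (x + t *\<^sub>R y) + norm (x - t *\<^sub>R y)) / 2 - 1 \<le> e * t))"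

definition weak_conv :: "(nat \<Rightarrow> 'a::real_normed_vector) \<Rightarrow> 'a \<Rightarrow> bool" where
  "weak_conv xs x \<longleftrightarrow>
     (\<forall>f :: 'a \<Rightarrow> real. bounded_linear f \<longrightarrow> (\<lambda>k. f (xs k)) \<longlonglongrightarrow> f x)"

definition delta_conv :: "(nat \<Rightarrow> 'a::real_normed_vector) \<Rightarrow> 'a \<Rightarrow> bool" where
  "delta_conv xs x \<longleftrightarrow>
     (\<forall>y. limsup (\<lambda>k. ereal (norm (xs k - x) - norm (xs k - y))) \<le> 0)"

definition op_weak_conv :: "(nat \<Rightarrow> 'a \<Rightarrow> 'a::real_normed_vector) \<Rightarrow> ('a \<Rightarrow> 'a) \<Rightarrow> bool" where
  "op_weak_conv gs g \<longleftrightarrow> (\<forall>x. weak_conv (\<lambda>k. gs k x) (g x))"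

definition op_strong_conv :: "(nat \<Rightarrow> 'a \<Rightarrow> 'a::real_normed_vector) \<Rightarrow> ('a \<Rightarrow> 'a) \<Rightarrow> bool" where
  "op_strong_conv gs g \<longleftrightarrow> (\<forall>x. (\<lambda>k. gs k x) \<longlonglongrightarrow> g x)"

definition lin_isometry :: "('a::real_normed_vector \<Rightarrow> 'a) \<Rightarrow> bool" where
  "lin_isometry g \<longleftrightarrow> linear g \<and> bij g \<and> (\<forall>x. norm (g x) = norm x)"

definition isometry_group :: "('a::real_normed_vector \<Rightarrow> 'a) set \<Rightarrow> bool" where
  "isometry_group D0 \<longleftrightarrow> (\<forall>g\<in>D0. lin_isometry g) \<and> id \<in> D0 \<and>
     (\<forall>g\<in>D0. \<forall>h\<in>D0. g \<circ> h \<in> D0) \<and> (\<forall>g\<in>D0. inv g \<in> D0)"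

definition dislocation_group :: "('a::real_normed_vector \<Rightarrow> 'a) set \<Rightarrow> bool" where
  "dislocation_group D0 \<longleftrightarrow> isometry_group D0 \<and>
     (\<forall>gs. (\<forall>k. gs k \<in> D0) \<and> \<not> op_weak_conv gs (\<lambda>_. 0) \<longrightarrow>
        (\<exists>r h h'. strict_mono r \<and> op_strong_conv (\<lambda>j. gs (r j)) h
                 \<and> op_strong_conv (\<lambda>j. inv (gs (r j))) h')) \<and>
     (\<forall>us w gs. delta_conv us 0 \<and> (\<forall>k. gs k \<in> D0) \<and> op_weak_conv gs (\<lambda>_. 0) \<longrightarrow>
        delta_conv (\<lambda>k. us k + gs k w) 0)"

end

theory Submission
  imports Defs
begin

text \<open>Fix \<open>n \<le> M\<close> and put \<open>v\<^sub>k = u\<^sub>k - \<Sum>\<^sub>m g\<^sub>k\<^sup>m w\<^sup>m\<close> (upper indices number the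
  profiles). Weak nullity of \<open>(g\<^sub>k\<^sup>n)\<^sup>-\<^sup>1 g\<^sub>k\<^sup>m\<close> is symmetric in \<open>n, m\<close>: the inverse of a weakly null
  sequence in a dislocation group is weakly null, by \<open>(\<ast>)\<close>, \<open>(\<ast>\<ast>)\<close> and uniqueness of
  \<open>\<Delta>\<close>-limits. Hence \<open>(\<ast>\<ast>)\<close> gives \<open>(g\<^sub>k\<^sup>n)\<^sup>-\<^sup>1 v\<^sub>k \<rightharpoondown> 0\<close>. If \<open>(g\<^sub>k\<^sup>n)\<^sup>-\<^sup>1 g\<^sub>k\<^sup>M\<^sup>+\<^sup>1\<close> were not weakly
  null, by \<open>(\<ast>)\<close> a subsequence of it would converge strongly; strongly convergent isometries
  preserve \<open>\<Delta>\<close>-convergence to \<open>0\<close>, so \<open>(g\<^sub>k\<^sup>M\<^sup>+\<^sup>1)\<^sup>-\<^sup>1 v\<^sub>k\<close> would \<open>\<Delta>\<close>-converge both to \<open>0\<close>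
  and to \<open>w\<^sup>M\<^sup>+\<^sup>1 \<noteq> 0\<close>. But in a uniformly convex space \<open>\<Delta>\<close>-limits of bounded sequences are
  unique.\<close>

lemma limsup_ereal_le_0_iff:
  fixes f :: "nat \<Rightarrow> real"
  shows "limsup (\<lambda>k. ereal (f k)) \<le> 0 \<longleftrightarrow> (\<forall>e>0. eventually (\<lambda>k. f k < e) sequentially)"
proof
  assume h: "limsup (\<lambda>k. ereal (f k)) \<le> 0"
  show "\<forall>e>0. eventually (\<lambda>k. f k < e) sequentially"
  proof (intro allI impI)
    fix e :: real assume "e > 0"
    then have "limsup (\<lambda>k. ereal (f k)) < ereal e" using h by (simp add: order.strict_trans1)
    from Limsup_lessD[OF this] show "eventually (\<lambda>k. f k < e) sequentially" by simp
  qed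
next
  assume h: "\<forall>e>0. eventually (\<lambda>k. f k < e) sequentially"
  show "limsup (\<lambda>k. ereal (f k)) \<le> 0"
    unfolding Limsup_le_iff
  proof (intro allI impI)
    fix y :: ereal assume y: "y > 0"
    show "eventually (\<lambda>k. ereal (f k) < y) sequentially"
    proof (cases y)
      case (real r)
      with y h have "eventually (\<lambda>k. f k < r) sequentially" by simp
      then show ?thesis by eventually_elim (simp add: real)
    qed (use y in simp_all)
  qed
qed

lemma delta_conv_iff_eventually:
  "delta_conv xs x \<longleftrightarrow>
     (\<forall>y. \<forall>e>0. eventually (\<lambda>k. norm (xs k - x) - norm (xs k - y) < e) sequentially)"
  unfolding delta_conv_def limsup_ereal_le_0_iff by blast

lemma delta_conv_iff_diff_zero: "delta_conv xs x \<longleftrightarrow> delta_conv (\<lambda>k. xs k - x) 0"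
  unfolding delta_conv_iff_eventually
proof (intro iffI allI impI)
  fix y and e :: real
  assume "\<forall>y. \<forall>e>0. eventually (\<lambda>k. norm (xs k - x) - norm (xs k - y) < e) sequentially" "e > 0"
  then have "eventually (\<lambda>k. norm (xs k - x) - norm (xs k - (y + x)) < e) sequentially" by blast
  then show "eventually (\<lambda>k. norm (xs k - x - 0) - norm (xs k - x - y) < e) sequentially"
    by (simp add: diff_diff_eq add.commute)
next
  fix y and e :: real
  assume "\<forall>y. \<forall>e>0. eventually (\<lambda>k. norm (xs k - x - 0) - norm (xs k - x - y) < e) sequentially" "e > 0"
  then have "eventually (\<lambda>k. norm (xs k - x - 0) - norm (xs k - x - (y - x)) < e) sequentially" by blast
  then show "eventually (\<lambda>k. norm (xs k - x) - norm (xs k - y) < e) sequentially" by simp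
qed

lemma delta_conv_subseq: "delta_conv xs x \<Longrightarrow> strict_mono r \<Longrightarrow> delta_conv (\<lambda>j. xs (r j)) x"
  unfolding delta_conv_iff_eventually using eventually_subseq by blast

lemma LIMSEQ_imp_delta_conv:
  assumes "xs \<longlonglongrightarrow> x"
  shows "delta_conv xs x"
  unfolding delta_conv_iff_eventually
proof (intro allI impI)
  fix y and e :: real assume "e > 0"
  have "((\<lambda>k. norm (xs k - x) - norm (xs k - y)) \<longlongrightarrow> norm (x - x) - norm (x - y)) sequentially"
    by (intro tendsto_intros assms)
  moreover have "norm (x - x) - norm (x - y) < e" using \<open>e > 0\<close> by (simp add: le_less_trans[of _ 0])
  ultimately show "eventually (\<lambda>k. norm (xs k - x) - norm (xs k - y) < e) sequentially"
    by (rule order_tendstoD)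
qed

lemma delta_conv_zero_const: "delta_conv (\<lambda>_. 0) 0"
  unfolding delta_conv_iff_eventually by (auto intro: le_less_trans[of _ 0])

lemma uniformly_convex_midpoint_bound:
  fixes e R :: real
  assumes uc: "uniformly_convex TYPE('a::real_normed_vector)" and "e > 0" "R > 0"
  obtains d where "d > 0"
    "\<And>p q::'a. norm (p - q) \<ge> e \<Longrightarrow> norm p \<le> R \<Longrightarrow> norm q \<le> R \<Longrightarrow>
       norm ((1/2) *\<^sub>R (p + q)) \<le> (1 - d) * max (norm p) (norm q)"
proof -
  from uc[unfolded uniformly_convex_def, rule_format, of "e / R"] \<open>e > 0\<close> \<open>R > 0\<close>
  obtain d where "d > 0" and unit: "\<And>x y::'a. norm x \<le> 1 \<Longrightarrow> norm y \<le> 1 \<Longrightarrow>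
      norm (x - y) \<ge> e / R \<Longrightarrow> norm ((1/2) *\<^sub>R (x + y)) \<le> 1 - d"
    by auto
  have "norm ((1/2) *\<^sub>R (p + q)) \<le> (1 - d) * max (norm p) (norm q)"
    if pq: "norm (p - q) \<ge> e" "norm p \<le> R" "norm q \<le> R" for p q :: 'a
  proof -
    define m where "m = max (norm p) (norm q)"
    have "e \<le> norm p + norm q" using pq(1) norm_triangle_ineq4[of p q] by simp
    then have "m > 0" "m \<le> R" using \<open>e > 0\<close> pq unfolding m_def by auto
    have "e / R \<le> e / m"
      using \<open>m > 0\<close> \<open>m \<le> R\<close> \<open>e > 0\<close> by (simp add: frac_le)
    also have "e / m \<le> norm ((1/m) *\<^sub>R p - (1/m) *\<^sub>R q)"
      using \<open>m > 0\<close> pq(1) by (simp add: scaleR_diff_right[symmetric] divide_right_mono)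
    finally have "e / R \<le> norm ((1/m) *\<^sub>R p - (1/m) *\<^sub>R q)" .
    moreover have "norm ((1/m) *\<^sub>R p) \<le> 1" "norm ((1/m) *\<^sub>R q) \<le> 1"
      using \<open>m > 0\<close> unfolding m_def by (simp_all add: field_simps)
    ultimately have "norm ((1/2) *\<^sub>R ((1/m) *\<^sub>R p + (1/m) *\<^sub>R q)) \<le> 1 - d"
      using unit by blast
    then have "norm ((1/2) *\<^sub>R (p + q)) / m \<le> 1 - d"
      using \<open>m > 0\<close> by (simp add: scaleR_add_right[symmetric])
    then show ?thesis using \<open>m > 0\<close> unfolding m_def by (simp add: pos_divide_le_eq)
  qed
  with \<open>d > 0\<close> show ?thesis using that by blast
qed

lemma delta_conv_unique:
  fixes a :: "nat \<Rightarrow> 'a::real_normed_vector"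
  assumes uc: "uniformly_convex TYPE('a)" and "bounded (range a)"
    and "delta_conv a x" "delta_conv a y"
  shows "x = y"
proof (rule ccontr)
  assume "x \<noteq> y"
  define e where "e = norm (x - y)"
  have "e > 0" using \<open>x \<noteq> y\<close> unfolding e_def by simp
  from \<open>bounded (range a)\<close> obtain B where B: "\<And>k. norm (a k) \<le> B" unfolding bounded_iff by blast
  define R where "R = B + norm x + norm y + 1"
  have "R > 0" using B[of 0] norm_ge_zero[of "a 0"] norm_ge_zero[of x] norm_ge_zero[of y]
    unfolding R_def by linarith
  obtain d where "d > 0" and mid: "\<And>p q::'a. norm (p - q) \<ge> e \<Longrightarrow> norm p \<le> R \<Longrightarrow> norm q \<le> R \<Longrightarrow>
       norm ((1/2) *\<^sub>R (p + q)) \<le> (1 - d) * max (norm p) (norm q)"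
    using uniformly_convex_midpoint_bound[OF uc \<open>e > 0\<close> \<open>R > 0\<close>] by blast
  define z where "z = (1/2) *\<^sub>R (x + y)"
  have "d * e / 4 > 0" using \<open>d > 0\<close> \<open>e > 0\<close> by simp
  then have "eventually (\<lambda>k. norm (a k - x) - norm (a k - z) < d * e / 4) sequentially"
    "eventually (\<lambda>k. norm (a k - y) - norm (a k - z) < d * e / 4) sequentially"
    using assms(3,4) unfolding delta_conv_iff_eventually by blast+
  from eventually_conj[OF this] obtain k where
    kx: "norm (a k - x) - norm (a k - z) < d * e / 4" and
    ky: "norm (a k - y) - norm (a k - z) < d * e / 4"
    unfolding eventually_sequentially by auto
  define p where "p = a k - x"
  define q where "q = a k - y"
  define m where "m = max (norm p) (norm q)"
  have "norm (p - q) = e" unfolding p_def q_def e_def by (simp add: norm_minus_commute)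
  have "norm p \<le> R" "norm q \<le> R"
    unfolding p_def q_def R_def using B[of k] norm_triangle_ineq4[of "a k" x]
      norm_triangle_ineq4[of "a k" y] norm_ge_zero[of x] norm_ge_zero[of y] by linarith+
  then have "norm ((1/2) *\<^sub>R (p + q)) \<le> (1 - d) * m"
    unfolding m_def using mid \<open>norm (p - q) = e\<close> by simp
  moreover have "(1/2) *\<^sub>R (p + q) = a k - z"
    unfolding z_def p_def q_def by (simp add: algebra_simps flip: scaleR_2)
  ultimately have "norm (a k - z) \<le> (1 - d) * m" by simp
  moreover have "m - norm (a k - z) < d * e / 4"
    using kx ky unfolding m_def p_def q_def by (cases "norm (a k - x) \<le> norm (a k - y)") auto
  ultimately have "d * m < d * (e / 4)" by (simp add: algebra_simps)
  then have "m < e / 4" using \<open>d > 0\<close> by simp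
  moreover have "e \<le> norm p + norm q" using \<open>norm (p - q) = e\<close> norm_triangle_ineq4[of p q] by simp
  moreover have "norm p \<le> m" "norm q \<le> m" unfolding m_def by simp_all
  ultimately show False using \<open>e > 0\<close> by linarith
qed

lemma dislocation_group_memD:
  assumes "dislocation_group D0" "g \<in> D0"
  shows "linear g" "bij g" "norm (g x) = norm x" "inv g \<in> D0" "h \<in> D0 \<Longrightarrow> g \<circ> h \<in> D0"
  using assms unfolding dislocation_group_def isometry_group_def lin_isometry_def by auto

lemma dislocation_group_strong_subseq:
  assumes "dislocation_group D0" "\<And>k. gs k \<in> D0" "\<not> op_weak_conv gs (\<lambda>_. 0)"
  obtains s h h' where "strict_mono s" "op_strong_conv (\<lambda>j. gs (s j)) h"
    "op_strong_conv (\<lambda>j. inv (gs (s j))) h'"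
  using assms unfolding dislocation_group_def by blast

lemma dislocation_group_delta_conv_add:
  assumes "dislocation_group D0" "delta_conv us 0" "\<And>k. gs k \<in> D0" "op_weak_conv gs (\<lambda>_. 0)"
  shows "delta_conv (\<lambda>k. us k + gs k w) 0"
  using assms unfolding dislocation_group_def by blast

lemma op_weak_conv_subseq:
  "op_weak_conv gs g \<Longrightarrow> strict_mono s \<Longrightarrow> op_weak_conv (\<lambda>j. gs (s j)) g"
  unfolding op_weak_conv_def weak_conv_def
  using LIMSEQ_subseq_LIMSEQ[of _ _ s] by (simp add: comp_def) blast

lemma dislocation_group_inv_op_weak_conv_zero:
  fixes gs :: "nat \<Rightarrow> 'a::real_normed_vector \<Rightarrow> 'a"
  assumes D: "dislocation_group D0" and uc: "uniformly_convex TYPE('a)"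
    and gs: "\<And>k. gs k \<in> D0" and "op_weak_conv gs (\<lambda>_. 0)"
  shows "op_weak_conv (\<lambda>k. inv (gs k)) (\<lambda>_. 0)"
proof (rule ccontr)
  assume not_null: "\<not> op_weak_conv (\<lambda>k. inv (gs k)) (\<lambda>_. 0)"
  obtain s h where "strict_mono s" and strong: "op_strong_conv (\<lambda>j. inv (inv (gs (s j)))) h"
    using dislocation_group_strong_subseq[OF D dislocation_group_memD(4)[OF D gs] not_null]
    by blast
  have strong': "(\<lambda>j. gs (s j) w) \<longlonglongrightarrow> h w" for w
    using strong dislocation_group_memD(2)[OF D gs] unfolding op_strong_conv_def
    by (simp add: inv_inv_eq)
  text \<open>By \<open>(\<ast>\<ast>)\<close> applied to the constant sequence \<open>0\<close>, the strong limit vanishes, while it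
    keeps the norm of \<open>w\<close>; so the space is trivial.\<close>
  have trivial: "w = 0" for w :: 'a
  proof -
    have "delta_conv (\<lambda>j. 0 + gs (s j) w) 0"
      using dislocation_group_delta_conv_add[OF D delta_conv_zero_const, of "\<lambda>j. gs (s j)"]
        gs op_weak_conv_subseq[OF assms(4) \<open>strict_mono s\<close>] by blast
    moreover have "bounded (range (\<lambda>j. gs (s j) w))"
      unfolding bounded_iff using dislocation_group_memD(3)[OF D gs] by auto
    ultimately have "h w = 0"
      using delta_conv_unique[OF uc _ LIMSEQ_imp_delta_conv[OF strong']] by simp
    moreover have "(\<lambda>j. norm (gs (s j) w)) \<longlonglongrightarrow> norm (h w)"
      by (intro tendsto_intros strong')
    then have "norm w = norm (h w)"
      using dislocation_group_memD(3)[OF D gs] by (simp add: LIMSEQ_const_iff)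
    ultimately show "w = 0" by simp
  qed
  have "op_weak_conv (\<lambda>k. inv (gs k)) (\<lambda>_. 0)"
    unfolding op_weak_conv_def weak_conv_def by (subst trivial) simp
  with not_null show False ..
qed

lemma dislocation_group_delta_conv_diff_sum:
  assumes D: "dislocation_group D0" and "finite S"
    and "\<And>m k. m \<in> S \<Longrightarrow> F m k \<in> D0" "\<And>m. m \<in> S \<Longrightarrow> op_weak_conv (F m) (\<lambda>_. 0)"
    and "delta_conv a 0"
  shows "delta_conv (\<lambda>k. a k - (\<Sum>m\<in>S. F m k (c m))) 0"
  using assms(2-4)
proof (induction S rule: finite_induct)
  case empty
  then show ?case using \<open>delta_conv a 0\<close> by simp
next
  case (insert m S)
  have "delta_conv (\<lambda>k. (a k - (\<Sum>m\<in>S. F m k (c m))) + F m k (- c m)) 0"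
    using insert.IH insert.prems
    by (intro dislocation_group_delta_conv_add[OF D]) simp_all
  moreover have "F m k (- c m) = - F m k (c m)" for k
    using dislocation_group_memD(1)[OF D insert.prems(1)[of m]] by (simp add: linear_neg)
  ultimately show ?case using insert.hyps by (simp add: algebra_simps)
qed

lemma delta_conv_zero_of_isometries_strongly_convergent:
  fixes H :: "nat \<Rightarrow> 'a::real_normed_vector \<Rightarrow> 'a"
  assumes "\<And>j. linear (H j)" "\<And>j x. norm (H j x) = norm x" "op_strong_conv H h"
    and "delta_conv (\<lambda>j. H j (a j)) 0"
  shows "delta_conv a 0"
  unfolding delta_conv_iff_eventually
proof (intro allI impI)
  fix z and e :: real assume "e > 0"
  then have "eventually (\<lambda>j. norm (H j (a j) - 0) - norm (H j (a j) - h z) < e / 2) sequentially"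
    using assms(4) half_gt_zero[OF \<open>e > 0\<close>] unfolding delta_conv_iff_eventually by blast
  moreover have "(\<lambda>j. norm (H j z - h z)) \<longlonglongrightarrow> 0"
    using assms(3) unfolding op_strong_conv_def by (simp add: tendsto_norm_zero_iff LIM_zero_iff)
  then have "eventually (\<lambda>j. norm (H j z - h z) < e / 2) sequentially"
    using order_tendstoD(2)[OF _ half_gt_zero[OF \<open>e > 0\<close>]] by blast
  ultimately show "eventually (\<lambda>j. norm (a j - 0) - norm (a j - z) < e) sequentially"
  proof eventually_elim
    case (elim j)
    have "norm (a j - z) = norm (H j (a j) - H j z)"
      using assms(2)[of j "a j - z"] linear_diff[OF assms(1)] by simp
    moreover have "norm (H j (a j) - h z) \<le> norm (H j (a j) - H j z) + norm (H j z - h z)"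
      using norm_triangle_ineq[of "H j (a j) - H j z" "H j z - h z"] by simp
    ultimately show ?case using elim assms(2)[of j "a j"] by simp
  qed
qed

lemma dislocation_group_op_weak_conv_zero_of_delta_limits:
  fixes G H :: "nat \<Rightarrow> 'a::real_normed_vector \<Rightarrow> 'a"
  assumes D: "dislocation_group D0" and uc: "uniformly_convex TYPE('a)"
    and G: "\<And>k. G k \<in> D0" and H: "\<And>k. H k \<in> D0" and "bounded (range v)"
    and "delta_conv (\<lambda>k. inv (G k) (v k)) 0" "delta_conv (\<lambda>k. inv (H k) (v k)) w" "w \<noteq> 0"
  shows "op_weak_conv (\<lambda>k. inv (G k) \<circ> H k) (\<lambda>_. 0)"
proof (rule ccontr)
  assume not_null: "\<not> op_weak_conv (\<lambda>k. inv (G k) \<circ> H k) (\<lambda>_. 0)"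
  have GH: "inv (G k) \<circ> H k \<in> D0" for k
    using dislocation_group_memD(4,5)[OF D] G H by blast
  obtain s h where "strict_mono s" and strong: "op_strong_conv (\<lambda>j. inv (G (s j)) \<circ> H (s j)) h"
    using dislocation_group_strong_subseq[OF D GH not_null] by blast
  define a where "a j = inv (H (s j)) (v (s j))" for j
  have "(inv (G (s j)) \<circ> H (s j)) (a j) = inv (G (s j)) (v (s j))" for j
    using dislocation_group_memD(2)[OF D H] unfolding a_def by (simp add: bij_is_surj surj_f_inv_f)
  then have "delta_conv a 0"
    using delta_conv_zero_of_isometries_strongly_convergent[OF _ _ strong]
      dislocation_group_memD(1,3)[OF D GH] delta_conv_subseq[OF assms(6) \<open>strict_mono s\<close>]
    by simp
  moreover have "delta_conv a w"
    unfolding a_def using delta_conv_subseq[OF assms(7) \<open>strict_mono s\<close>] .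
  moreover have "bounded (range a)"
    using \<open>bounded (range v)\<close> dislocation_group_memD(3)[OF D dislocation_group_memD(4)[OF D H]]
    unfolding bounded_iff a_def by auto
  ultimately show False using delta_conv_unique[OF uc] \<open>w \<noteq> 0\<close> by metis
qed

lemma dislocation_group_op_weak_conv_zero_swap:
  fixes G H :: "nat \<Rightarrow> 'a::real_normed_vector \<Rightarrow> 'a"
  assumes D: "dislocation_group D0" and uc: "uniformly_convex TYPE('a)"
    and G: "\<And>k. G k \<in> D0" and H: "\<And>k. H k \<in> D0"
    and "op_weak_conv (\<lambda>k. inv (G k) \<circ> H k) (\<lambda>_. 0)"
  shows "op_weak_conv (\<lambda>k. inv (H k) \<circ> G k) (\<lambda>_. 0)"
proof -
  have "inv (inv (G k) \<circ> H k) = inv (H k) \<circ> G k" for k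
    using dislocation_group_memD(2)[OF D G] dislocation_group_memD(2)[OF D H]
    by (simp add: o_inv_distrib bij_imp_bij_inv inv_inv_eq)
  moreover have "inv (G k) \<circ> H k \<in> D0" for k
    using dislocation_group_memD(4,5)[OF D] G H by blast
  ultimately show ?thesis
    using dislocation_group_inv_op_weak_conv_zero[OF D uc _ assms(5)] by simp
qed

lemma dislocation_group_delta_conv_profile_remainder:
  fixes g :: "nat \<Rightarrow> nat \<Rightarrow> 'a::real_normed_vector \<Rightarrow> 'a"
  assumes D: "dislocation_group D0" and uc: "uniformly_convex TYPE('a)"
    and g: "\<And>m k. m \<in> {1..M} \<Longrightarrow> g m k \<in> D0" and n: "n \<in> {1..M}"
    and "delta_conv (\<lambda>k. inv (g n k) (u k)) (w n)"
    and orth: "\<And>m m'. 1 \<le> m \<Longrightarrow> m < m' \<Longrightarrow> m' \<le> M \<Longrightarrow>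
      op_weak_conv (\<lambda>k. inv (g m k) \<circ> g m' k) (\<lambda>_. 0)"
  shows "delta_conv (\<lambda>k. inv (g n k) (u k - (\<Sum>m\<in>{1..M}. g m k (w m)))) 0"
proof -
  define F where "F m k = inv (g n k) \<circ> g m k" for m k
  have F: "F m k \<in> D0" if "m \<in> {1..M}" for m k
    unfolding F_def using dislocation_group_memD(4,5)[OF D] g n that by blast
  have "op_weak_conv (F m) (\<lambda>_. 0)" if m: "m \<in> {1..M} - {n}" for m
  proof (cases "n < m")
    case True
    then show ?thesis using orth[of n m] n m unfolding F_def by auto
  next
    case False
    then have "op_weak_conv (\<lambda>k. inv (g m k) \<circ> g n k) (\<lambda>_. 0)"
      using orth[of m n] n m by auto
    then show ?thesis
      unfolding F_def using g n m
      by (intro dislocation_group_op_weak_conv_zero_swap[OF D uc, where G = "g m"]) auto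
  qed
  then have "delta_conv (\<lambda>k. (inv (g n k) (u k) - w n) - (\<Sum>m\<in>{1..M}-{n}. F m k (w m))) 0"
    using F assms(5)[unfolded delta_conv_iff_diff_zero[of _ "w n"]]
    by (intro dislocation_group_delta_conv_diff_sum[OF D]) simp_all
  moreover have "inv (g n k) (u k - (\<Sum>m\<in>{1..M}. g m k (w m)))
      = (inv (g n k) (u k) - w n) - (\<Sum>m\<in>{1..M}-{n}. F m k (w m))" for k
  proof -
    have lin: "linear (inv (g n k))"
      using dislocation_group_memD(1)[OF D dislocation_group_memD(4)[OF D g[OF n]]] .
    have "F n k (w n) = w n"
      using dislocation_group_memD(2)[OF D g[OF n]] unfolding F_def by (simp add: bij_is_inj)
    moreover have "(\<Sum>m\<in>{1..M}. F m k (w m)) = F n k (w n) + (\<Sum>m\<in>{1..M}-{n}. F m k (w m))"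
      using n by (simp add: sum.remove)
    ultimately show ?thesis
      unfolding linear_diff[OF lin] linear_sum[OF lin] by (simp add: F_def)
  qed
  ultimately show ?thesis by simp
qed

lemma bounded_range_diff_sum_isometries:
  fixes u :: "nat \<Rightarrow> 'a::real_normed_vector"
  assumes "bounded (range u)" and "\<And>m k x. m \<in> S \<Longrightarrow> norm (g m k x) = norm x"
  shows "bounded (range (\<lambda>k. u k - (\<Sum>m\<in>S. g m k (w m))))"
proof -
  obtain B where B: "\<And>k. norm (u k) \<le> B" using assms(1) unfolding bounded_iff by blast
  have "norm (u k - (\<Sum>m\<in>S. g m k (w m))) \<le> B + (\<Sum>m\<in>S. norm (w m))" for k
  proof -
    have "norm (\<Sum>m\<in>S. g m k (w m)) \<le> (\<Sum>m\<in>S. norm (g m k (w m)))"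
      by (rule norm_sum)
    also have "\<dots> = (\<Sum>m\<in>S. norm (w m))"
      using assms(2) by simp
    finally have "norm (\<Sum>m\<in>S. g m k (w m)) \<le> (\<Sum>m\<in>S. norm (w m))" .
    then show ?thesis using B[of k] norm_triangle_ineq4[of "u k"] by (meson add_mono order_trans)
  qed
  then show ?thesis unfolding bounded_iff by blast
qed

theorem lemma5p9:
  fixes D0 D :: "('a::banach \<Rightarrow> 'a) set"
    and u :: "nat \<Rightarrow> 'a"
    and M :: nat
    and g :: "nat \<Rightarrow> nat \<Rightarrow> 'a \<Rightarrow> 'a"
    and w :: "nat \<Rightarrow> 'a"
    and gM1 :: "nat \<Rightarrow> 'a \<Rightarrow> 'a"
    and wM1 :: 'a
    and r :: "nat \<Rightarrow> nat"
  assumes "uniformly_convex TYPE('a)"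
    and "uniformly_smooth TYPE('a)"
    and "dislocation_group D0"
    and "D \<subseteq> D0"
    and "bounded (range u)"
    and "M \<ge> 1"
    and "\<And>n k. n \<in> {1..M} \<Longrightarrow> g n k \<in> D"
    and "\<And>k. g 1 k = id"
    and "\<And>n. n \<in> {1..M} \<Longrightarrow> delta_conv (\<lambda>k. inv (g n k) (u k)) (w n)"
    and "\<And>n m. 1 \<le> n \<Longrightarrow> n < m \<Longrightarrow> m \<le> M \<Longrightarrow>
           op_weak_conv (\<lambda>k. inv (g n k) \<circ> g m k) (\<lambda>_. 0)"
    and "\<And>k. gM1 k \<in> D"
    and "strict_mono r"
    and "delta_conv (\<lambda>j. inv (gM1 (r j))
            (u (r j) - w 1 - (\<Sum>n=2..M. g n (r j) (w n)))) wM1"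
    and "wM1 \<noteq> 0"
  shows "\<forall>n\<in>{1..M}. op_weak_conv (\<lambda>j. inv (g n (r j)) \<circ> gM1 (r j)) (\<lambda>_. 0)"
proof
  fix n assume n: "n \<in> {1..M}"
  have g: "\<And>m k. m \<in> {1..M} \<Longrightarrow> g m k \<in> D0" and gM1: "\<And>k. gM1 k \<in> D0"
    using assms(4,7,11) by blast+
  define v where "v k = u k - (\<Sum>m\<in>{1..M}. g m k (w m))" for k
  have "(\<Sum>m\<in>{1..M}. g m k (w m)) = w 1 + (\<Sum>m=2..M. g m k (w m))" for k
    using sum.atLeast_Suc_atMost[OF assms(6), of "\<lambda>m. g m k (w m)"] assms(8)
    by (simp add: numeral_2_eq_2)
  then have v_eq: "u k - w 1 - (\<Sum>m=2..M. g m k (w m)) = v k" for k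
    by (simp add: v_def diff_diff_eq)
  have "bounded (range v)"
    unfolding v_def using assms(5) dislocation_group_memD(3)[OF assms(3) g]
    by (rule bounded_range_diff_sum_isometries)
  then have "bounded (range (\<lambda>j. v (r j)))" by (rule bounded_subset) auto
  moreover have "delta_conv (\<lambda>j. inv (g n (r j)) (v (r j))) 0"
    using dislocation_group_delta_conv_profile_remainder[where g = g and w = w,
        OF assms(3,1) g n assms(9)[OF n] assms(10)]
    unfolding v_def[symmetric] by (rule delta_conv_subseq[OF _ assms(12)])
  ultimately show "op_weak_conv (\<lambda>j. inv (g n (r j)) \<circ> gM1 (r j)) (\<lambda>_. 0)"
    using assms(13,14) unfolding v_eq
    by (intro dislocation_group_op_weak_conv_zero_of_delta_limits[OF assms(3,1) g[OF n] gM1])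
qed

end
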